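(* Let $A$ be an instance and $K\in\{\mathbb{B},\mathbb{N}\}$. Then $[A]_{\leftrightarrow}$ admits a left query algorithm over $K$ if and only if $\mathrm{CSP}(A)$ admits a left query algorithm over $K$.
   Context: A schema is a finite set of relation symbols, each with a positive arity. An instance $A$ over a schema $\sigma$ assigns to each $R\in\sigma$ of arity $r$ a finite $r$-ary relation $R^A$; $\mathrm{adom}(A)$ is the set of elements occurring in its facts. A homomorphism $h:A\to B$ is a map $h:\mathrm{adom}(A)\to\mathrm{adom}(B)$ preserving every relation; we write $A\to B$ if one exists. $A,B$ are homomorphically equivalent if $A\to B$ and $B\to A$; $[A]_{\leftrightarrow}$ is the class of all instances homomorphically equivalent to $A$. $\mathrm{CSP}(B)=\{A: A\to B\}$. $\hom_{\mathbb{N}}(A,B)$ is the number of homomorphisms $A\to B$; $\hom_{\mathbb{B}}(A,B)=1$ if $A\to B$ and $0$ otherwise. For $\mathcal{F}=\{F_1,\dots,F_k\}$, $\hom_K(\mathcal{F},A)=(\hom_K(F_i,A))_{i\le k}$. A left $k$-query algorithm over $K$ for a class $\mathcal{C}$ (closed under isomorphism) is a pair $(\mathcal{F},X)$ with $|\mathcal{F}|=k$ and $X$ a set of $k$-tuples over $K$ (no effectiveness required) such that for every instance $D$: $D\in\mathcal{C}$ iff $\hom_K(\mathcal{F},D)\in X$; $\mathcal{C}$ admits one if one exists for some $k>0$. *)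

theory Defs
  imports Main "HOL-Library.FuncSet"
begin

text \<open>Instances have elements of type nat (any countably infinite supply of elements suffices,
  since instances are finite); an instance assigns to each symbol a finite set of tuples
  (lists) of the right length, and the empty relation to symbols outside the schema.\<close>

definition schema :: "'r set \<Rightarrow> ('r \<Rightarrow> nat) \<Rightarrow> bool" where
  "schema S ar \<longleftrightarrow> finite S \<and> (\<forall>R\<in>S. 0 < ar R)"

type_synonym 'r inst = "'r \<Rightarrow> nat list set"

definition is_instance :: "'r set \<Rightarrow> ('r \<Rightarrow> nat) \<Rightarrow> 'r inst \<Rightarrow> bool" where
  "is_instance S ar A \<longleftrightarrow>
     (\<forall>R. finite (A R)) \<and> (\<forall>R. R \<notin> S \<longrightarrow> A R = {}) \<and>
     (\<forall>R\<in>S. \<forall>t\<in>A R. length t = ar R)"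

definition adom :: "'r set \<Rightarrow> 'r inst \<Rightarrow> nat set" where
  "adom S A = (\<Union>R\<in>S. \<Union>t\<in>A R. set t)"

text \<open>Homomorphisms as maps adom A \<rightarrow> adom B (extensional, so they can be counted).\<close>
definition homs :: "'r set \<Rightarrow> 'r inst \<Rightarrow> 'r inst \<Rightarrow> (nat \<Rightarrow> nat) set" where
  "homs S A B = {h \<in> adom S A \<rightarrow>\<^sub>E adom S B. \<forall>R\<in>S. \<forall>t\<in>A R. map h t \<in> B R}"

definition hom_exists :: "'r set \<Rightarrow> 'r inst \<Rightarrow> 'r inst \<Rightarrow> bool" where
  "hom_exists S A B \<longleftrightarrow> homs S A B \<noteq> {}"

definition hom_equiv_class :: "'r set \<Rightarrow> ('r \<Rightarrow> nat) \<Rightarrow> 'r inst \<Rightarrow> 'r inst set" where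
  "hom_equiv_class S ar A = {D. is_instance S ar D \<and> hom_exists S D A \<and> hom_exists S A D}"

definition CSP :: "'r set \<Rightarrow> ('r \<Rightarrow> nat) \<Rightarrow> 'r inst \<Rightarrow> 'r inst set" where
  "CSP S ar A = {D. is_instance S ar D \<and> hom_exists S D A}"

datatype semiringK = KB | KN

definition hom_K :: "semiringK \<Rightarrow> 'r set \<Rightarrow> 'r inst \<Rightarrow> 'r inst \<Rightarrow> nat" where
  "hom_K K S F D = (case K of KN \<Rightarrow> card (homs S F D)
                             | KB \<Rightarrow> (if hom_exists S F D then 1 else 0))"

definition hom_K_vec :: "semiringK \<Rightarrow> 'r set \<Rightarrow> 'r inst list \<Rightarrow> 'r inst \<Rightarrow> nat list" where
  "hom_K_vec K S Fs D = map (\<lambda>F. hom_K K S F D) Fs"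

definition left_query_algorithm ::
  "'r set \<Rightarrow> ('r \<Rightarrow> nat) \<Rightarrow> semiringK \<Rightarrow> 'r inst set \<Rightarrow> nat \<Rightarrow> 'r inst list \<Rightarrow> nat list set \<Rightarrow> bool" where
  "left_query_algorithm S ar K C k Fs X \<longleftrightarrow>
     length Fs = k \<and> distinct Fs \<and> (\<forall>F\<in>set Fs. is_instance S ar F) \<and>
     (\<forall>x\<in>X. length x = k) \<and>
     (\<forall>D. is_instance S ar D \<longrightarrow> (D \<in> C \<longleftrightarrow> hom_K_vec K S Fs D \<in> X))"

definition admits_left_qa :: "'r set \<Rightarrow> ('r \<Rightarrow> nat) \<Rightarrow> semiringK \<Rightarrow> 'r inst set \<Rightarrow> bool" where
  "admits_left_qa S ar K C \<longleftrightarrow> (\<exists>k>0. \<exists>Fs X. left_query_algorithm S ar K C k Fs X)"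

end

theory Submission
  imports Defs
begin

text \<open>
  Since A -> D is detected by the single query A, membership in the homomorphism class of A is
  membership in CSP(A) plus one more query. Conversely, D -> A holds iff the disjoint union D + A
  is homomorphically equivalent to A, and a homomorphism from F into D + A amounts to a union P of
  connected components of F together with homomorphisms F|P -> D and F|(adom F - P) -> A. Hence
  hom(F, D + A), counted or Boolean, is a function of the values hom(F|P, D), and a query algorithm
  for the class of A becomes one for CSP(A) whose queries are the induced subinstances F|P.
\<close>

lemma restrict_in_homs:
  assumes f: "\<forall>R\<in>S. \<forall>t\<in>F R. map f t \<in> G R"
  shows "restrict f (adom S F) \<in> homs S F G"
  unfolding homs_def
proof (intro CollectI conjI ballI)
  show "restrict f (adom S F) \<in> adom S F \<rightarrow>\<^sub>E adom S G"
  proof (rule PiE_I)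
    fix x assume x: "x \<in> adom S F"
    then obtain R t where "R \<in> S" "t \<in> F R" "x \<in> set t"
      unfolding adom_def by blast
    moreover have "f x \<in> set (map f t)"
      using \<open>x \<in> set t\<close> by simp
    moreover have "map f t \<in> G R"
      using f calculation by blast
    ultimately have "f x \<in> adom S G"
      unfolding adom_def by blast
    then show "restrict f (adom S F) x \<in> adom S G"
      using x by simp
  qed simp
next
  fix R t assume "R \<in> S" "t \<in> F R"
  then have eq: "map (restrict f (adom S F)) t = map f t"
    by (auto simp: adom_def)
  show "map (restrict f (adom S F)) t \<in> G R"
    unfolding eq using f \<open>R \<in> S\<close> \<open>t \<in> F R\<close> by blast
qed

lemma homs_preserve_fact: "h \<in> homs S F G \<Longrightarrow> R \<in> S \<Longrightarrow> t \<in> F R \<Longrightarrow> map h t \<in> G R"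
  by (simp add: homs_def)

lemma hom_exists_iff: "hom_exists S F G \<longleftrightarrow> (\<exists>f. \<forall>R\<in>S. \<forall>t\<in>F R. map f t \<in> G R)"
proof
  assume "hom_exists S F G"
  then obtain h where "h \<in> homs S F G"
    unfolding hom_exists_def by blast
  then show "\<exists>f. \<forall>R\<in>S. \<forall>t\<in>F R. map f t \<in> G R"
    unfolding homs_def by blast
next
  assume "\<exists>f. \<forall>R\<in>S. \<forall>t\<in>F R. map f t \<in> G R"
  then obtain f where "\<forall>R\<in>S. \<forall>t\<in>F R. map f t \<in> G R" ..
  then show "hom_exists S F G"
    unfolding hom_exists_def using restrict_in_homs by blast
qed

lemma finite_adom: "schema S ar \<Longrightarrow> is_instance S ar F \<Longrightarrow> finite (adom S F)"
  by (auto simp: schema_def is_instance_def adom_def)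

lemma finite_homs:
  assumes "schema S ar" "is_instance S ar F" "is_instance S ar G"
  shows "finite (homs S F G)"
  unfolding homs_def
  by (rule finite_subset[OF _ finite_PiE[of "adom S F" "\<lambda>_. adom S G"]])
    (auto simp: finite_adom[OF assms(1,2)] finite_adom[OF assms(1,3)])

lemma hom_K_eq_0_iff: "finite (homs S F D) \<Longrightarrow> hom_K K S F D = 0 \<longleftrightarrow> \<not> hom_exists S F D"
  by (cases K) (auto simp: hom_K_def hom_exists_def)

lemma fact_nonempty: "schema S ar \<Longrightarrow> is_instance S ar F \<Longrightarrow> R \<in> S \<Longrightarrow> t \<in> F R \<Longrightarrow> t \<noteq> []"
  unfolding schema_def is_instance_def by fastforce

lemma set_fact_subset_adom: "R \<in> S \<Longrightarrow> t \<in> F R \<Longrightarrow> set t \<subseteq> adom S F"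
  unfolding adom_def by auto

definition component_union :: "'r set \<Rightarrow> 'r inst \<Rightarrow> nat set \<Rightarrow> bool" where
  "component_union S F P \<longleftrightarrow>
     P \<subseteq> adom S F \<and> (\<forall>R\<in>S. \<forall>t\<in>F R. set t \<subseteq> P \<or> set t \<subseteq> adom S F - P)"

definition induced :: "'r inst \<Rightarrow> nat set \<Rightarrow> 'r inst" where
  "induced F P = (\<lambda>R. {t \<in> F R. set t \<subseteq> P})"

lemma component_union_adom: "component_union S F (adom S F)"
  unfolding component_union_def adom_def by auto

lemma component_union_Diff: "component_union S F P \<Longrightarrow> component_union S F (adom S F - P)"
  unfolding component_union_def by blast

lemma finite_component_unions:
  "schema S ar \<Longrightarrow> is_instance S ar F \<Longrightarrow> finite {P. component_union S F P}"
  by (rule finite_subset[of _ "Pow (adom S F)"]) (auto simp: component_union_def finite_adom)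

lemma adom_induced: "component_union S F P \<Longrightarrow> adom S (induced F P) = P"
  unfolding component_union_def adom_def induced_def by blast

lemma is_instance_induced: "is_instance S ar F \<Longrightarrow> is_instance S ar (induced F P)"
  unfolding is_instance_def induced_def by auto

definition disjoint_union :: "'r inst \<Rightarrow> 'r inst \<Rightarrow> 'r inst" where
  "disjoint_union D A = (\<lambda>R. map (\<lambda>x. 2 * x) ` D R \<union> map (\<lambda>x. 2 * x + 1) ` A R)"

lemma is_instance_disjoint_union:
  "is_instance S ar D \<Longrightarrow> is_instance S ar A \<Longrightarrow> is_instance S ar (disjoint_union D A)"
  unfolding is_instance_def disjoint_union_def by auto

lemma fact_disjoint_union_cases:
  assumes "map h t \<in> disjoint_union D A R"
  shows "map h t \<in> map (\<lambda>x. 2 * x) ` D R \<and> (\<forall>x\<in>set t. even (h x)) \<or>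
         map h t \<in> map (\<lambda>x. 2 * x + 1) ` A R \<and> (\<forall>x\<in>set t. odd (h x))"
proof -
  have parity: "\<forall>x\<in>set t. P (h x)" if "map h t = map f s" "\<forall>y. P (f y)" for P f s
  proof
    fix x assume "x \<in> set t"
    then have "h x \<in> set (map f s)"
      using that(1) by (metis set_map imageI)
    then show "P (h x)"
      using that(2) by auto
  qed
  from assms consider s where "s \<in> D R" "map h t = map (\<lambda>x. 2 * x) s"
    | s where "s \<in> A R" "map h t = map (\<lambda>x. 2 * x + 1) s"
    unfolding disjoint_union_def by blast
  then show ?thesis
  proof cases
    case 1
    then show ?thesis
      using parity[of "\<lambda>x. 2 * x" s even] by auto
  next
    case 2
    then show ?thesis
      using parity[of "\<lambda>x. 2 * x + 1" s odd] by auto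
  qed
qed

lemma homs_untag:
  assumes "\<And>x. g (f x) = x" and "\<forall>R\<in>S. \<forall>t\<in>G R. map h t \<in> map f ` B R"
  shows "restrict (g \<circ> h) (adom S G) \<in> homs S G B"
proof (rule restrict_in_homs, intro ballI)
  fix R t assume "R \<in> S" "t \<in> G R"
  then obtain s where "s \<in> B R" "map h t = map f s"
    using assms(2) by blast
  moreover have "g \<circ> f = id"
    using assms(1) by (simp add: fun_eq_iff)
  moreover have "map (g \<circ> h) t = map (g \<circ> f) s"
    using \<open>map h t = map f s\<close> by (simp flip: map_map)
  ultimately show "map (g \<circ> h) t \<in> B R"
    by simp
qed

definition glue :: "'r set \<Rightarrow> 'r inst \<Rightarrow> nat set \<Rightarrow> (nat \<Rightarrow> nat) \<Rightarrow> (nat \<Rightarrow> nat) \<Rightarrow> nat \<Rightarrow> nat" where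
  "glue S F P h1 h2 x =
     (if x \<in> P then 2 * h1 x else if x \<in> adom S F then 2 * h2 x + 1 else undefined)"

lemma even_part_glue:
  "component_union S F P \<Longrightarrow> {x \<in> adom S F. even (glue S F P h1 h2 x)} = P"
  unfolding component_union_def glue_def by auto

lemma glue_in_homs:
  assumes P: "component_union S F P"
    and h1: "h1 \<in> homs S (induced F P) D" and h2: "h2 \<in> homs S (induced F (adom S F - P)) A"
  shows "glue S F P h1 h2 \<in> homs S F (disjoint_union D A)"
proof -
  have "map (glue S F P h1 h2) t \<in> disjoint_union D A R" if R: "R \<in> S" and t: "t \<in> F R" for R t
  proof -
    have "set t \<subseteq> P \<or> set t \<subseteq> adom S F - P"
      using P R t unfolding component_union_def by blast
    then consider "set t \<subseteq> P" | "set t \<subseteq> adom S F - P"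
      by blast
    then show ?thesis
    proof cases
      case 1
      then have "map h1 t \<in> D R"
        using homs_preserve_fact[OF h1 R] t by (simp add: induced_def)
      moreover have "map (glue S F P h1 h2) t = map (\<lambda>x. 2 * x) (map h1 t)"
        using 1 by (auto simp: glue_def)
      ultimately show ?thesis
        unfolding disjoint_union_def by (simp only:) (intro UnI1 imageI)
    next
      case 2
      then have "map h2 t \<in> A R"
        using homs_preserve_fact[OF h2 R] t by (simp add: induced_def)
      moreover have "map (glue S F P h1 h2) t = map (\<lambda>x. 2 * x + 1) (map h2 t)"
        using 2 by (auto simp: glue_def)
      ultimately show ?thesis
        unfolding disjoint_union_def by (simp only:) (intro UnI2 imageI)
    qed
  qed
  then have "restrict (glue S F P h1 h2) (adom S F) \<in> homs S F (disjoint_union D A)"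
    by (intro restrict_in_homs ballI)
  moreover have "restrict (glue S F P h1 h2) (adom S F) = glue S F P h1 h2"
    using P by (auto simp: component_union_def glue_def fun_eq_iff)
  ultimately show ?thesis
    by simp
qed

lemma inj_on_glue:
  assumes P: "component_union S F P"
  shows "inj_on (case_prod (glue S F P))
           (homs S (induced F P) D \<times> homs S (induced F (adom S F - P)) A)"
proof (rule inj_onI, clarsimp)
  fix h1 h2 g1 g2
  assume "h1 \<in> homs S (induced F P) D" "g1 \<in> homs S (induced F P) D"
    and "h2 \<in> homs S (induced F (adom S F - P)) A" "g2 \<in> homs S (induced F (adom S F - P)) A"
    and eq: "glue S F P h1 h2 = glue S F P g1 g2"
  then have "h1 \<in> extensional P" "g1 \<in> extensional P"
    and "h2 \<in> extensional (adom S F - P)" "g2 \<in> extensional (adom S F - P)"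
    using adom_induced[OF P] adom_induced[OF component_union_Diff[OF P]]
    by (auto simp: homs_def PiE_def)
  moreover have "h1 x = g1 x" if "x \<in> P" for x
    using fun_cong[OF eq, of x] that by (simp add: glue_def)
  moreover have "h2 x = g2 x" if "x \<in> adom S F - P" for x
    using fun_cong[OF eq, of x] that by (simp add: glue_def)
  ultimately show "h1 = g1 \<and> h2 = g2"
    by (metis extensionalityI)
qed

text \<open>Facts are nonempty, so each fact is sent entirely into D or entirely into A; this is what
  makes the even part P a union of components.\<close>

lemma hom_into_disjoint_union_glued:
  assumes ne: "\<forall>R\<in>S. \<forall>t\<in>F R. t \<noteq> []" and h: "h \<in> homs S F (disjoint_union D A)"
  defines "P \<equiv> {x \<in> adom S F. even (h x)}"
  shows "component_union S F P \<and>
    h \<in> case_prod (glue S F P) ` (homs S (induced F P) D \<times> homs S (induced F (adom S F - P)) A)"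
proof -
  note cases = fact_disjoint_union_cases[OF homs_preserve_fact[OF h]]
  have P: "component_union S F P"
    unfolding component_union_def
  proof (intro conjI ballI)
    fix R t assume R: "R \<in> S" and t: "t \<in> F R"
    show "set t \<subseteq> P \<or> set t \<subseteq> adom S F - P"
      using cases[OF R t] set_fact_subset_adom[of R S t F, OF R t] by (auto simp: P_def)
  qed (auto simp: P_def)
  have even_side: "\<forall>R\<in>S. \<forall>t\<in>induced F P R. map h t \<in> map (\<lambda>x. 2 * x) ` D R"
  proof (intro ballI)
    fix R t assume R: "R \<in> S" and "t \<in> induced F P R"
    then have t: "t \<in> F R" and "set t \<subseteq> P"
      by (auto simp: induced_def)
    moreover have "hd t \<in> set t"
      using ne R t by simp
    ultimately have "even (h (hd t))"
      by (auto simp: P_def)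
    then show "map h t \<in> map (\<lambda>x. 2 * x) ` D R"
      using cases[OF R t] \<open>hd t \<in> set t\<close> by blast
  qed
  have odd_side: "\<forall>R\<in>S. \<forall>t\<in>induced F (adom S F - P) R. map h t \<in> map (\<lambda>x. 2 * x + 1) ` A R"
  proof (intro ballI)
    fix R t assume R: "R \<in> S" and "t \<in> induced F (adom S F - P) R"
    then have t: "t \<in> F R" and "set t \<subseteq> adom S F - P"
      by (auto simp: induced_def)
    moreover have "hd t \<in> set t"
      using ne R t by simp
    ultimately have "odd (h (hd t))"
      by (auto simp: P_def)
    then show "map h t \<in> map (\<lambda>x. 2 * x + 1) ` A R"
      using cases[OF R t] \<open>hd t \<in> set t\<close> by blast
  qed
  define h1 where "h1 = restrict ((\<lambda>y. y div 2) \<circ> h) P"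
  define h2 where "h2 = restrict ((\<lambda>y. y div 2) \<circ> h) (adom S F - P)"
  have "h1 \<in> homs S (induced F P) D"
    using homs_untag[OF _ even_side, of "\<lambda>y. y div 2"] adom_induced[OF P] by (simp add: h1_def)
  moreover have "h2 \<in> homs S (induced F (adom S F - P)) A"
    using homs_untag[OF _ odd_side, of "\<lambda>y. y div 2"] adom_induced[OF component_union_Diff[OF P]]
    by (simp add: h2_def)
  moreover have "h \<in> extensional (adom S F)"
    using h by (simp add: homs_def PiE_def)
  then have "h = glue S F P h1 h2"
    by (auto simp: fun_eq_iff glue_def h1_def h2_def P_def extensional_def)
  ultimately show ?thesis
    using P by (auto intro: image_eqI[where x = "(h1, h2)"])
qed

lemma homs_disjoint_union:
  assumes "schema S ar" "is_instance S ar F"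
  shows "homs S F (disjoint_union D A) = (\<Union>P\<in>{P. component_union S F P}.
     case_prod (glue S F P) ` (homs S (induced F P) D \<times> homs S (induced F (adom S F - P)) A))"
    (is "_ = (\<Union>P\<in>_. ?glued P)")
proof (intro equalityI subsetI)
  fix h assume "h \<in> homs S F (disjoint_union D A)"
  moreover have "\<forall>R\<in>S. \<forall>t\<in>F R. t \<noteq> []"
    using fact_nonempty[OF assms] by blast
  ultimately have "component_union S F {x \<in> adom S F. even (h x)}"
    and "h \<in> ?glued {x \<in> adom S F. even (h x)}"
    using hom_into_disjoint_union_glued by blast+
  then show "h \<in> (\<Union>P\<in>{P. component_union S F P}. ?glued P)"
    by (intro UN_I[where a = "{x \<in> adom S F. even (h x)}"]) simp_all
next
  fix h assume "h \<in> (\<Union>P\<in>{P. component_union S F P}. ?glued P)"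
  then obtain P h1 h2 where "component_union S F P" "h = glue S F P h1 h2"
    and "h1 \<in> homs S (induced F P) D" "h2 \<in> homs S (induced F (adom S F - P)) A"
    by auto
  then show "h \<in> homs S F (disjoint_union D A)"
    using glue_in_homs by simp
qed

lemma card_homs_disjoint_union:
  assumes S: "schema S ar" and F: "is_instance S ar F"
    and D: "is_instance S ar D" and A: "is_instance S ar A"
  shows "card (homs S F (disjoint_union D A)) = (\<Sum>P | component_union S F P.
     card (homs S (induced F P) D) * card (homs S (induced F (adom S F - P)) A))"
proof -
  have fin: "finite (homs S (induced F P) B)" if "is_instance S ar B" for P B
    using finite_homs[OF S is_instance_induced[OF F] that] .
  have disj: "case_prod (glue S F P) ` X \<inter> case_prod (glue S F Q) ` Y = {}"
    if "component_union S F P" "component_union S F Q" "P \<noteq> Q" for P Q X Y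
    using that by (auto dest: arg_cong[where f = "\<lambda>h. {x \<in> adom S F. even (h x)}"] simp: even_part_glue)
  show ?thesis
    unfolding homs_disjoint_union[OF S F]
    by (subst card_UN_disjoint[OF finite_component_unions[OF S F]])
      (use fin[OF D] fin[OF A] disj in \<open>auto simp: card_image inj_on_glue card_cartesian_product\<close>)
qed

lemma hom_exists_disjoint_union:
  assumes "schema S ar" "is_instance S ar F"
  shows "hom_exists S F (disjoint_union D A) \<longleftrightarrow> (\<exists>P. component_union S F P \<and>
     hom_exists S (induced F P) D \<and> hom_exists S (induced F (adom S F - P)) A)"
  unfolding hom_exists_def homs_disjoint_union[OF assms] by auto

definition hom_K_parts :: "semiringK \<Rightarrow> 'r set \<Rightarrow> 'r inst \<Rightarrow> ('r inst \<Rightarrow> nat) \<Rightarrow> 'r inst \<Rightarrow> nat" where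
  "hom_K_parts K S A v F = (case K of
      KN \<Rightarrow> (\<Sum>P | component_union S F P. v (induced F P) * hom_K KN S (induced F (adom S F - P)) A)
    | KB \<Rightarrow> (if \<exists>P. component_union S F P \<and> v (induced F P) \<noteq> 0 \<and>
                   hom_K KB S (induced F (adom S F - P)) A \<noteq> 0 then 1 else 0))"

lemma hom_K_parts_cong:
  assumes "\<And>P. component_union S F P \<Longrightarrow> v (induced F P) = w (induced F P)"
  shows "hom_K_parts K S A v F = hom_K_parts K S A w F"
  using assms unfolding hom_K_parts_def by (cases K) (auto intro!: sum.cong)

lemma hom_K_disjoint_union:
  assumes "schema S ar" "is_instance S ar F" "is_instance S ar D" "is_instance S ar A"
  shows "hom_K K S F (disjoint_union D A) = hom_K_parts K S A (\<lambda>G. hom_K K S G D) F"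
  using card_homs_disjoint_union[OF assms] hom_exists_disjoint_union[OF assms(1,2)]
  by (cases K) (auto simp: hom_K_parts_def hom_K_def)

lemma disjoint_union_in_hom_equiv_class_iff:
  assumes D: "is_instance S ar D" and A: "is_instance S ar A"
  shows "disjoint_union D A \<in> hom_equiv_class S ar A \<longleftrightarrow> hom_exists S D A"
proof -
  have "hom_exists S A (disjoint_union D A)"
    unfolding hom_exists_iff disjoint_union_def by (intro exI[of _ "\<lambda>x. 2 * x + 1"]) blast
  moreover have "hom_exists S (disjoint_union D A) A \<longleftrightarrow> hom_exists S D A"
  proof
    assume "hom_exists S (disjoint_union D A) A"
    then obtain f where f: "\<forall>R\<in>S. \<forall>t\<in>disjoint_union D A R. map f t \<in> A R"
      unfolding hom_exists_iff by blast
    have "\<forall>R\<in>S. \<forall>t\<in>D R. map (f \<circ> (\<lambda>x. 2 * x)) t \<in> A R"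
    proof (intro ballI)
      fix R t assume "R \<in> S" "t \<in> D R"
      moreover have "map (\<lambda>x. 2 * x) t \<in> disjoint_union D A R"
        using \<open>t \<in> D R\<close> unfolding disjoint_union_def by blast
      ultimately show "map (f \<circ> (\<lambda>x. 2 * x)) t \<in> A R"
        using f by (simp flip: map_map)
    qed
    then show "hom_exists S D A"
      unfolding hom_exists_iff by blast
  next
    assume "hom_exists S D A"
    then obtain g where "\<forall>R\<in>S. \<forall>t\<in>D R. map g t \<in> A R"
      unfolding hom_exists_iff by blast
    then have "\<forall>R\<in>S. \<forall>t\<in>disjoint_union D A R.
        map (\<lambda>x. if even x then g (x div 2) else x div 2) t \<in> A R"
      unfolding disjoint_union_def by (auto simp: comp_def)
    then show "hom_exists S (disjoint_union D A) A"
      unfolding hom_exists_iff by blast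
  qed
  ultimately show ?thesis
    using is_instance_disjoint_union[OF D A] unfolding hom_equiv_class_def by auto
qed

lemma admits_left_qa_by_hom_K_values:
  assumes fin: "finite \<G>" and ne: "\<G> \<noteq> {}" and inst: "\<forall>G\<in>\<G>. is_instance S ar G"
    and C: "\<And>D. is_instance S ar D \<Longrightarrow> D \<in> C \<longleftrightarrow> Q (restrict (\<lambda>G. hom_K K S G D) \<G>)"
  shows "admits_left_qa S ar K C"
proof -
  obtain Gs where Gs: "set Gs = \<G>" "distinct Gs"
    using finite_distinct_list[OF fin] by blast
  define X where "X = {y. length y = length Gs \<and> Q (restrict (\<lambda>G. the (map_of (zip Gs y) G)) \<G>)}"
  have "restrict (\<lambda>G. the (map_of (zip Gs (hom_K_vec K S Gs D)) G)) \<G>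
      = restrict (\<lambda>G. hom_K K S G D) \<G>" for D
    by (auto simp: hom_K_vec_def map_of_zip_map Gs(1))
  then have "left_query_algorithm S ar K C (length Gs) Gs X"
    unfolding left_query_algorithm_def X_def using Gs inst C by (auto simp: hom_K_vec_def)
  moreover have "length Gs > 0"
    using Gs(1) ne by auto
  ultimately show ?thesis
    unfolding admits_left_qa_def by blast
qed

lemma admits_left_qa_hom_equiv_class:
  assumes S: "schema S ar" and A: "is_instance S ar A"
    and "admits_left_qa S ar K (CSP S ar A)"
  shows "admits_left_qa S ar K (hom_equiv_class S ar A)"
proof -
  obtain k Fs X where Fs: "left_query_algorithm S ar K (CSP S ar A) k Fs X"
    using assms(3) unfolding admits_left_qa_def by blast
  show ?thesis
  proof (rule admits_left_qa_by_hom_K_values[where \<G> = "insert A (set Fs)"])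
    fix D assume D: "is_instance S ar D"
    have "D \<in> hom_equiv_class S ar A \<longleftrightarrow> D \<in> CSP S ar A \<and> hom_exists S A D"
      using D unfolding hom_equiv_class_def CSP_def by simp
    also have "\<dots> \<longleftrightarrow> hom_K_vec K S Fs D \<in> X \<and> hom_K K S A D \<noteq> 0"
      using Fs D hom_K_eq_0_iff[OF finite_homs[OF S A D]]
      unfolding left_query_algorithm_def by auto
    finally show "D \<in> hom_equiv_class S ar A \<longleftrightarrow>
        (\<lambda>v. map v Fs \<in> X \<and> v A \<noteq> 0) (restrict (\<lambda>G. hom_K K S G D) (insert A (set Fs)))"
      by (simp add: hom_K_vec_def cong: map_cong)
  qed (use Fs A in \<open>auto simp: left_query_algorithm_def\<close>)
qed

lemma admits_left_qa_CSP:
  assumes S: "schema S ar" and A: "is_instance S ar A"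
    and "admits_left_qa S ar K (hom_equiv_class S ar A)"
  shows "admits_left_qa S ar K (CSP S ar A)"
proof -
  obtain k Fs X where "k > 0" and Fs: "left_query_algorithm S ar K (hom_equiv_class S ar A) k Fs X"
    using assms(3) unfolding admits_left_qa_def by blast
  then obtain F0 where F0: "F0 \<in> set Fs"
    unfolding left_query_algorithm_def by (metis length_greater_0_conv list.set_intros(1) neq_Nil_conv)
  have inst: "\<forall>F\<in>set Fs. is_instance S ar F"
    using Fs unfolding left_query_algorithm_def by blast
  define \<G> where "\<G> = (\<Union>F\<in>set Fs. induced F ` {P. component_union S F P})"
  have "finite \<G>"
    using finite_component_unions[OF S] inst unfolding \<G>_def by blast
  moreover have "\<G> \<noteq> {}"
    using F0 component_union_adom unfolding \<G>_def by blast
  moreover have "\<forall>G\<in>\<G>. is_instance S ar G"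
    using inst is_instance_induced unfolding \<G>_def by blast
  ultimately show ?thesis
  proof (rule admits_left_qa_by_hom_K_values)
    fix D assume D: "is_instance S ar D"
    have parts: "hom_K K S F (disjoint_union D A)
        = hom_K_parts K S A (restrict (\<lambda>G. hom_K K S G D) \<G>) F" if F: "F \<in> set Fs" for F
    proof -
      have "induced F P \<in> \<G>" if "component_union S F P" for P
        using F that unfolding \<G>_def by blast
      then have "hom_K_parts K S A (\<lambda>G. hom_K K S G D) F
          = hom_K_parts K S A (restrict (\<lambda>G. hom_K K S G D) \<G>) F"
        by (auto intro: hom_K_parts_cong)
      then show ?thesis
        using hom_K_disjoint_union[OF S _ D A] inst F by simp
    qed
    have "D \<in> CSP S ar A \<longleftrightarrow> disjoint_union D A \<in> hom_equiv_class S ar A"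
      using D A disjoint_union_in_hom_equiv_class_iff unfolding CSP_def by blast
    also have "\<dots> \<longleftrightarrow> hom_K_vec K S Fs (disjoint_union D A) \<in> X"
      using Fs is_instance_disjoint_union[OF D A] unfolding left_query_algorithm_def by blast
    finally show "D \<in> CSP S ar A \<longleftrightarrow> (\<lambda>v. map (hom_K_parts K S A v) Fs \<in> X)
        (restrict (\<lambda>G. hom_K K S G D) \<G>)"
      using parts by (simp add: hom_K_vec_def cong: map_cong)
  qed
qed

theorem mainTheorem6:
  fixes S :: "'r set" and ar :: "'r \<Rightarrow> nat" and A :: "'r inst" and K :: semiringK
  assumes "schema S ar" and "is_instance S ar A"
  shows "admits_left_qa S ar K (hom_equiv_class S ar A) \<longleftrightarrow> admits_left_qa S ar K (CSP S ar A)"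
  using admits_left_qa_CSP[OF assms] admits_left_qa_hom_equiv_class[OF assms] by blast

end
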